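(* Let $X$ be a normal space and let $\mathfrak{P}$ be realcompactness. Then $\lambda_\mathfrak{P}X=\beta X\setminus\mathrm{cl}_{\beta X}(\upsilon X\setminus X)$.
   Context: All spaces are completely regular Hausdorff. $\beta X$ is the Stone–Čech compactification and $\upsilon X\subseteq\beta X$ the Hewitt realcompactification of $X$. A space is realcompact if it is homeomorphic to a closed subspace of a power of $\mathbb{R}$. $\mathrm{Coz}(X)$ is the set of cozero-sets $X\setminus f^{-1}(0)$, $f:X\to[0,1]$ continuous. For a topological property $\mathfrak{P}$, $\lambda_\mathfrak{P}X=\bigcup\{\mathrm{int}_{\beta X}\mathrm{cl}_{\beta X}C: C\in\mathrm{Coz}(X),\ \mathrm{cl}_XC\text{ has }\mathfrak{P}\}$. *)

theory Defs
  imports "HOL-Analysis.Analysis"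
begin

definition cozero_sets :: "'a topology \<Rightarrow> 'a set set" where
  "cozero_sets X = {{x \<in> topspace X. f x \<noteq> 0} | f.
      continuous_map X (top_of_set {0..1::real}) f}"

text \<open>Realcompact: homeomorphic to a closed subspace of a power of the reals.
  The index set is taken inside the type 'a \<Rightarrow> real, which is large enough
  (|C(X)| \<le> |'a \<Rightarrow> real|).\<close>
definition realcompact_space :: "'a topology \<Rightarrow> bool" where
  "realcompact_space X \<longleftrightarrow>
     (\<exists>(I :: ('a \<Rightarrow> real) set) f.
        embedding_map X (product_topology (\<lambda>i. euclideanreal) I) f \<and>
        closedin (product_topology (\<lambda>i. euclideanreal) I) (f ` topspace X))"

definition stone_cech :: "'a topology \<Rightarrow> 'b topology \<Rightarrow> ('a \<Rightarrow> 'b) \<Rightarrow> bool" where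
  "stone_cech X B e \<longleftrightarrow>
     compact_space B \<and> Hausdorff_space B \<and> embedding_map X B e \<and>
     B closure_of (e ` topspace X) = topspace B \<and>
     (\<forall>f. continuous_map X (top_of_set {0..1::real}) f \<longrightarrow>
        (\<exists>g. continuous_map B (top_of_set {0..1::real}) g \<and>
             (\<forall>x\<in>topspace X. g (e x) = f x)))"

definition hewitt :: "'a topology \<Rightarrow> 'b topology \<Rightarrow> ('a \<Rightarrow> 'b) \<Rightarrow> 'b set" where
  "hewitt X B e = {p \<in> topspace B. \<forall>f. continuous_map X euclideanreal f \<longrightarrow>
      (\<exists>g. continuous_map (subtopology B (insert p (e ` topspace X))) euclideanreal g \<and>
           (\<forall>x\<in>topspace X. g (e x) = f x))}"

definition lambda_realcompact :: "'a topology \<Rightarrow> 'b topology \<Rightarrow> ('a \<Rightarrow> 'b) \<Rightarrow> 'b set" where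
  "lambda_realcompact X B e = \<Union>{B interior_of (B closure_of (e ` C)) | C.
      C \<in> cozero_sets X \<and> realcompact_space (subtopology X (X closure_of C))}"

end

theory Submission
  imports Defs
begin

text \<open>For a closed set Y of a normal space X, the subspace Y is realcompact iff every point
  of \<upsilon>X in the \<beta>X-closure of Y lies in X.

  If Y is a closed subspace of a power of the reals, Tietze's theorem and the defining property
  of \<upsilon>X extend the embedding of Y to any such point p; continuity pushes p into the
  closed image of Y, and the inverse of the embedding then identifies p with a point of Y.
  Conversely, embed X into the power of the reals indexed by its continuous functions. A point q
  in the closure of the image of Y is matched, by compactness of \<beta>X, by a point b of the
  closure of Y at which the Stone-Cech extensions of all arctan-compressed coordinates take the
  compressed coordinates of q. These values lie strictly inside (0,1), so b lies in \<upsilon>X,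
  hence in X, and q is the evaluation at b.

  A point of \<beta>X lies off the closure of \<upsilon>X - X iff an Urysohn function provides a
  cozero neighbourhood of it whose closure misses \<upsilon>X - X, which gives the theorem.\<close>

lemma embedding_map_of_compose:
  assumes f: "continuous_map X Y f" and g: "continuous_map Y Z g"
    and gf: "embedding_map X Z (g \<circ> f)"
  shows "embedding_map X Y f"
proof -
  obtain h where h: "homeomorphic_maps X (subtopology Z ((g \<circ> f) ` topspace X)) (g \<circ> f) h"
    using gf homeomorphic_map_maps unfolding embedding_map_def by blast
  have "continuous_map (subtopology Y (f ` topspace X)) (subtopology Z ((g \<circ> f) ` topspace X)) g"
    using g by (auto simp: continuous_map_in_subtopology continuous_map_from_subtopology image_comp)
  then have "continuous_map (subtopology Y (f ` topspace X)) X (h \<circ> g)"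
    using h continuous_map_compose unfolding homeomorphic_maps_def by blast
  moreover have "continuous_map X (subtopology Y (f ` topspace X)) f"
    using f by (simp add: continuous_map_in_subtopology)
  moreover have "h (g (f x)) = x" if "x \<in> topspace X" for x
    using h that by (simp add: homeomorphic_maps_def)
  ultimately have "homeomorphic_maps X (subtopology Y (f ` topspace X)) f (h \<circ> g)"
    by (auto simp: homeomorphic_maps_def)
  then show ?thesis
    unfolding embedding_map_def homeomorphic_map_maps by blast
qed

lemma embedding_map_from_subtopology:
  assumes "embedding_map X Y f" "S \<subseteq> topspace X"
  shows "embedding_map (subtopology X S) Y f"
proof -
  have h: "homeomorphic_map X (subtopology Y (f ` topspace X)) f"
    using assms(1) by (simp add: embedding_map_def)
  then have "f ` topspace X \<subseteq> topspace Y"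
    by (metis continuous_map_image_subset_topspace homeomorphic_imp_continuous_map le_inf_iff topspace_subtopology)
  then have "f ` (topspace X \<inter> S) = topspace (subtopology Y (f ` topspace X)) \<inter> f ` S"
    using assms(2) by auto
  from homeomorphic_map_subtopologies[OF h this]
  have "homeomorphic_map (subtopology X S) (subtopology (subtopology Y (f ` topspace X)) (f ` S)) f" .
  moreover have "subtopology (subtopology Y (f ` topspace X)) (f ` S) = subtopology Y (f ` S)"
    using assms(2) by (simp add: subtopology_subtopology inf.absorb2 image_mono)
  ultimately show ?thesis
    using assms(2) by (simp add: embedding_map_def inf.absorb2)
qed

lemma embedding_map_closure_of_image:
  assumes "embedding_map X Y f" "S \<subseteq> topspace X"
  shows "f ` topspace X \<inter> Y closure_of (f ` S) = f ` (X closure_of S)"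
proof -
  have "f ` topspace X \<inter> Y closure_of (f ` S) = subtopology Y (f ` topspace X) closure_of (f ` S)"
    using assms(2) by (simp add: closure_of_subtopology Int_absorb1 image_mono)
  also have "\<dots> = f ` (X closure_of S)"
    using assms by (simp add: embedding_map_def homeomorphic_map_closure_of)
  finally show ?thesis .
qed

lemma cozero_sets_less:
  assumes h: "continuous_map X euclideanreal h"
  shows "{x \<in> topspace X. h x < c} \<in> cozero_sets X"
proof -
  define f where "f x = min 1 (max 0 (c - h x))" for x
  have "continuous_map X euclideanreal f"
    unfolding f_def using h by (intro continuous_intros) auto
  moreover have "f \<in> topspace X \<rightarrow> {0..1}"
    by (auto simp: f_def)
  ultimately have "continuous_map X (top_of_set {0..1}) f"
    by (simp add: continuous_map_in_subtopology)
  moreover have "{x \<in> topspace X. h x < c} = {x \<in> topspace X. f x \<noteq> 0}"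
    by (auto simp: f_def)
  ultimately show ?thesis
    unfolding cozero_sets_def by (auto intro!: exI[of _ f])
qed

lemma image_closure_of_subset_closedin:
  assumes "continuous_map X Y f" "closedin Y T" "f ` S \<subseteq> T"
  shows "f ` (X closure_of S) \<subseteq> T"
  using continuous_map_image_closure_subset[OF assms(1)] closure_of_minimal[OF assms(3,2)]
  by (rule order_trans)

lemma closure_of_image_compact:
  assumes "continuous_map X Y f" "compact_space X" "Hausdorff_space Y" "S \<subseteq> topspace X"
  shows "Y closure_of (f ` S) = f ` (X closure_of S)"
proof
  have "closed_map X Y f"
    using assms(1-3) by (simp add: continuous_imp_closed_map)
  then show "Y closure_of (f ` S) \<subseteq> f ` (X closure_of S)"
    using assms(4) by (simp add: closed_map_closure_of_image)
  show "f ` (X closure_of S) \<subseteq> Y closure_of (f ` S)"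
    using assms(1) by (rule continuous_map_image_closure_subset)
qed

definition evaluation_map :: "'a topology \<Rightarrow> 'a \<Rightarrow> ('a \<Rightarrow> real) \<Rightarrow> real" where
  "evaluation_map X x = (\<lambda>g\<in>{g. continuous_map X euclideanreal g}. g x)"

text \<open>The library's Tychonoff embedding uses only the bounded [0,1]-valued functions as
  coordinates; projecting onto those coordinates shows that the evaluation at all continuous
  functions is an embedding too.\<close>
lemma embedding_map_evaluation:
  assumes "completely_regular_space X" "Hausdorff_space X"
  shows "embedding_map X (powertop_real {g. continuous_map X euclideanreal g}) (evaluation_map X)"
proof -
  define I where "I = {g. continuous_map X euclideanreal g}"
  define K where "K = mspace (submetric (cfunspace X euclidean_metric) {f. f \<in> topspace X \<rightarrow> {0..1::real}})"
  have "embedding_map X (product_topology (\<lambda>_. top_of_set {0..1::real}) K) (\<lambda>x. \<lambda>g\<in>K. g x)"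
    using completely_regular_space_cube_embedding_explicit[OF assms] unfolding K_def .
  then have L: "embedding_map X (powertop_real K) (\<lambda>x. \<lambda>g\<in>K. g x)"
    by (simp add: subtopology_product_topology[symmetric] embedding_map_in_subtopology)
  have KI: "K \<subseteq> I"
    unfolding K_def I_def by (simp add: subset_iff)
  have "continuous_map X (powertop_real I) (evaluation_map X)"
    by (auto simp: continuous_map_componentwise I_def evaluation_map_def)
  moreover have "continuous_map (powertop_real I) (powertop_real K) (\<lambda>z. restrict z K)"
    unfolding continuous_map_componentwise
    using KI by (auto intro: continuous_map_product_projection)
  moreover have "embedding_map X (powertop_real K) ((\<lambda>z. restrict z K) \<circ> evaluation_map X)"
    using L by (rule embedding_map_eq) (use KI in \<open>auto simp: fun_eq_iff I_def evaluation_map_def\<close>)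
  ultimately show ?thesis
    unfolding I_def by (rule embedding_map_of_compose)
qed

text \<open>Stone-Cech extensions are granted only for maps into [0,1], whereas the Hewitt
  realcompactification is defined by extensions of real-valued maps; the homeomorphism
  squash of the reals onto (0,1) converts between the two.\<close>
definition squash :: "real \<Rightarrow> real" where "squash t = arctan t / pi + 1/2"
definition unsquash :: "real \<Rightarrow> real" where "unsquash s = tan (pi * s - pi/2)"

lemma squash_range: "squash t \<in> {0<..<1}"
proof -
  have "- (pi/2) < arctan t" "arctan t < pi/2" by (rule arctan_lbound, rule arctan_ubound)
  then show ?thesis by (auto simp: squash_def field_simps)
qed

lemma unsquash_squash [simp]: "unsquash (squash t) = t"
  by (simp add: unsquash_def squash_def algebra_simps tan_arctan)

lemma squash_eq_iff [simp]: "squash s = squash t \<longleftrightarrow> s = t"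
  by (metis unsquash_squash)

lemma continuous_map_squash: "continuous_map euclideanreal euclideanreal squash"
proof -
  have "continuous_on UNIV squash"
    unfolding squash_def by (intro continuous_intros) auto
  then show ?thesis by simp
qed

lemma continuous_map_unsquash: "continuous_map (top_of_set {0<..<1}) euclideanreal unsquash"
proof -
  have "cos (pi * s - pi/2) \<noteq> 0" if "s \<in> {0<..<1}" for s
    using that cos_gt_zero_pi[of "pi * s - pi/2"] by auto
  then have "continuous_on {0<..<1} unsquash"
    unfolding unsquash_def by (intro continuous_intros) auto
  then show ?thesis by simp
qed

lemma stone_cech_continuous_map:
  assumes "stone_cech X B e"
  shows "continuous_map X B e"
proof -
  have "homeomorphic_map X (subtopology B (e ` topspace X)) e"
    using assms by (simp add: stone_cech_def embedding_map_def)
  then show ?thesis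
    by (auto simp: homeomorphic_eq_everything_map continuous_map_in_subtopology)
qed

lemma stone_cech_squash_extensions:
  assumes sc: "stone_cech X B e"
  obtains h where "\<And>k. continuous_map X euclideanreal k \<Longrightarrow> continuous_map B euclideanreal (h k)"
    "\<And>k x. continuous_map X euclideanreal k \<Longrightarrow> x \<in> topspace X \<Longrightarrow> h k (e x) = squash (k x)"
proof -
  have "\<exists>h. continuous_map B euclideanreal h \<and> (\<forall>x\<in>topspace X. h (e x) = squash (k x))"
    if k: "continuous_map X euclideanreal k" for k
  proof -
    have "continuous_map X euclideanreal (squash \<circ> k)"
      using k continuous_map_squash by (rule continuous_map_compose)
    moreover have "squash \<circ> k \<in> topspace X \<rightarrow> {0..1}"
      using squash_range by (simp add: Pi_iff less_imp_le)
    ultimately have "continuous_map X (top_of_set {0..1}) (squash \<circ> k)"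
      by (simp add: continuous_map_in_subtopology)
    then obtain h where "continuous_map B (top_of_set {0..1}) h" "\<forall>x\<in>topspace X. h (e x) = (squash \<circ> k) x"
      using sc unfolding stone_cech_def by blast
    then show ?thesis
      by (auto simp: continuous_map_in_subtopology)
  qed
  then show thesis
    using that by metis
qed

lemma sublevel_closure_of_dense_image:
  assumes e: "continuous_map X B e" and dense: "B closure_of (e ` topspace X) = topspace B"
    and h: "continuous_map B euclideanreal h"
    and C: "C = {x \<in> topspace X. h (e x) < c}"
  shows "{b \<in> topspace B. h b < c} \<subseteq> B interior_of (B closure_of (e ` C))"
    and "B closure_of (e ` (X closure_of C)) \<subseteq> {b \<in> topspace B. h b \<le> c}"
proof -
  define V where "V = {b \<in> topspace B. h b \<in> {..<c}}"
  have V: "openin B V"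
    unfolding V_def using h by (rule openin_continuous_map_preimage) simp
  have "V \<inter> e ` topspace X = e ` C"
    using continuous_map_image_subset_topspace[OF e] by (auto simp: V_def C)
  then have "V \<subseteq> B closure_of (e ` C)"
    using openin_Int_closure_of_subset[OF V, of "e ` topspace X"] dense by (auto simp: V_def)
  then show "{b \<in> topspace B. h b < c} \<subseteq> B interior_of (B closure_of (e ` C))"
    using interior_of_maximal[OF _ V] by (simp add: V_def)
  have "B closure_of (e ` (X closure_of C)) \<subseteq> B closure_of (e ` C)"
    using closure_of_mono[OF continuous_map_image_closure_subset[OF e, of C], of B] by simp
  also have "\<dots> \<subseteq> {b \<in> topspace B. h b \<in> {..c}}"
  proof (rule closure_of_minimal)
    show "e ` C \<subseteq> {b \<in> topspace B. h b \<in> {..c}}"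
      using continuous_map_image_subset_topspace[OF e] by (auto simp: C)
    show "closedin B {b \<in> topspace B. h b \<in> {..c}}"
      using h by (rule closedin_continuous_map_preimage) simp
  qed
  finally show "B closure_of (e ` (X closure_of C)) \<subseteq> {b \<in> topspace B. h b \<le> c}"
    by auto
qed

lemma stone_cech_separating_cozero_set:
  assumes sc: "stone_cech X B e" and Z: "closedin B Z" and p: "p \<in> topspace B - Z"
  obtains C where "C \<in> cozero_sets X" "p \<in> B interior_of (B closure_of (e ` C))"
    "B closure_of (e ` (X closure_of C)) \<inter> Z = {}"
proof -
  have "compact_space B" "Hausdorff_space B" and dense: "B closure_of (e ` topspace X) = topspace B"
    using sc by (auto simp: stone_cech_def)
  then have "completely_regular_space B"
    by (simp add: compact_Hausdorff_or_regular_imp_normal_space normal_imp_completely_regular_space)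
  then obtain h :: "'b \<Rightarrow> real" where h01: "continuous_map B (top_of_set {0..1}) h"
      and hp: "h p = 0" and hZ: "h ` Z \<subseteq> {1}"
    using Z p unfolding completely_regular_space_def by metis
  have h: "continuous_map B euclideanreal h"
    using h01 by (simp add: continuous_map_in_subtopology)
  have e: "continuous_map X B e"
    by (rule stone_cech_continuous_map[OF sc])
  define C where "C = {x \<in> topspace X. h (e x) < 1/2}"
  have "C \<in> cozero_sets X"
    using cozero_sets_less[OF continuous_map_compose[OF e h], of "1/2"] by (simp add: C_def)
  moreover have "p \<in> B interior_of (B closure_of (e ` C))"
    using sublevel_closure_of_dense_image(1)[OF e dense h C_def] p hp by auto
  moreover have "B closure_of (e ` (X closure_of C)) \<inter> Z = {}"
    using sublevel_closure_of_dense_image(2)[OF e dense h C_def] hZ by force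
  ultimately show thesis
    by (rule that)
qed

lemma in_hewittI:
  assumes b: "b \<in> topspace B"
    and squashed: "\<And>f. continuous_map X euclideanreal f \<Longrightarrow>
      \<exists>k. continuous_map B euclideanreal k \<and> (\<forall>x\<in>topspace X. k (e x) = squash (f x)) \<and> k b \<in> {0<..<1}"
  shows "b \<in> hewitt X B e"
  unfolding hewitt_def
proof (intro CollectI conjI allI impI b)
  fix f assume "continuous_map X euclideanreal f"
  then obtain k where k: "continuous_map B euclideanreal k"
      "\<And>x. x \<in> topspace X \<Longrightarrow> k (e x) = squash (f x)" "k b \<in> {0<..<1}"
    using squashed by blast
  define S where "S = subtopology B (insert b (e ` topspace X))"
  have "continuous_map S euclideanreal k"
    unfolding S_def using k(1) by (rule continuous_map_from_subtopology)
  moreover have "k \<in> topspace S \<rightarrow> {0<..<1}"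
    using k(2,3) squash_range by (auto simp: S_def)
  ultimately have "continuous_map S (top_of_set {0<..<1}) k"
    by (simp add: continuous_map_in_subtopology)
  then have "continuous_map S euclideanreal (unsquash \<circ> k)"
    using continuous_map_unsquash by (rule continuous_map_compose)
  moreover have "\<forall>x\<in>topspace X. (unsquash \<circ> k) (e x) = f x"
    using k(2) by simp
  ultimately show "\<exists>g. continuous_map (subtopology B (insert b (e ` topspace X))) euclideanreal g \<and>
      (\<forall>x\<in>topspace X. g (e x) = f x)"
    unfolding S_def by (intro exI[of _ "unsquash \<circ> k"] conjI)
qed

lemma hewitt_extend:
  assumes X: "normal_space X" and Y: "closedin X Y" and p: "p \<in> hewitt X B e"
    and g: "continuous_map (subtopology X Y) euclideanreal g"
  obtains G where "continuous_map (subtopology B (insert p (e ` Y))) euclideanreal G"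
    "\<And>y. y \<in> Y \<Longrightarrow> G (e y) = g y"
proof -
  have YX: "Y \<subseteq> topspace X"
    using Y closedin_subset by blast
  obtain F where F: "continuous_map X euclideanreal F" "\<And>y. y \<in> Y \<Longrightarrow> F y = g y"
    using Tietze_extension_realinterval[OF X Y, of UNIV g] g by auto
  then obtain G where G: "continuous_map (subtopology B (insert p (e ` topspace X))) euclideanreal G"
      "\<forall>x\<in>topspace X. G (e x) = F x"
    using p unfolding hewitt_def by blast
  have "continuous_map (subtopology B (insert p (e ` Y))) euclideanreal G"
    by (rule continuous_map_from_subtopology_mono[OF G(1)]) (use YX in auto)
  moreover have "G (e y) = g y" if "y \<in> Y" for y
    using F(2) G(2) YX that by auto
  ultimately show thesis
    by (rule that)
qed

lemma hewitt_extend_product: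
  fixes f :: "'a \<Rightarrow> 'i \<Rightarrow> real"
  assumes X: "normal_space X" and Y: "closedin X Y" and p: "p \<in> hewitt X B e"
    and f: "continuous_map (subtopology X Y) (powertop_real I) f"
  obtains G where "continuous_map (subtopology B (insert p (e ` Y))) (powertop_real I) G"
    "\<And>y. y \<in> Y \<Longrightarrow> G (e y) = f y"
proof -
  have "\<forall>i\<in>I. \<exists>g. continuous_map (subtopology B (insert p (e ` Y))) euclideanreal g \<and>
      (\<forall>y\<in>Y. g (e y) = f y i)"
  proof
    fix i assume "i \<in> I"
    then have "continuous_map (subtopology X Y) euclideanreal (\<lambda>y. f y i)"
      using f unfolding continuous_map_componentwise by blast
    then obtain g where "continuous_map (subtopology B (insert p (e ` Y))) euclideanreal g"
        "\<And>y. y \<in> Y \<Longrightarrow> g (e y) = f y i"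
      by (rule hewitt_extend[OF X Y p]) blast
    then show "\<exists>g. continuous_map (subtopology B (insert p (e ` Y))) euclideanreal g \<and>
        (\<forall>y\<in>Y. g (e y) = f y i)"
      by blast
  qed
  then obtain g where g: "\<And>i. i \<in> I \<Longrightarrow> continuous_map (subtopology B (insert p (e ` Y))) euclideanreal (g i)"
      "\<And>i y. i \<in> I \<Longrightarrow> y \<in> Y \<Longrightarrow> g i (e y) = f y i"
    by metis
  have "continuous_map (subtopology B (insert p (e ` Y))) (powertop_real I) (\<lambda>t. \<lambda>i\<in>I. g i t)"
    using g(1) by (auto simp: continuous_map_componentwise)
  moreover have "(\<lambda>i\<in>I. g i (e y)) = f y" if "y \<in> Y" for y
  proof -
    have "f y \<in> extensional I"
      using continuous_map_image_subset_topspace[OF f] that closedin_subset[OF Y] by (force simp: PiE_iff)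
    then show ?thesis
      using g(2) that by (auto simp: extensional_def)
  qed
  ultimately show thesis
    using that by blast
qed

lemma hewitt_Int_closure_of_realcompact:
  assumes sc: "stone_cech X B e" and X: "normal_space X" and Y: "closedin X Y"
    and rc: "realcompact_space (subtopology X Y)"
  shows "hewitt X B e \<inter> B closure_of (e ` Y) \<subseteq> e ` Y"
proof
  fix p assume p: "p \<in> hewitt X B e \<inter> B closure_of (e ` Y)"
  have tY: "topspace (subtopology X Y) = Y"
    using Y closedin_subset by (auto simp: topspace_subtopology)
  obtain I :: "('a \<Rightarrow> real) set" and f
    where emb: "embedding_map (subtopology X Y) (powertop_real I) f"
      and cl: "closedin (powertop_real I) (f ` Y)"
    using rc unfolding realcompact_space_def tY by blast
  obtain f' where f': "homeomorphic_maps (subtopology X Y) (subtopology (powertop_real I) (f ` Y)) f f'"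
    using emb tY by (auto simp: embedding_map_def homeomorphic_map_maps)
  define S where "S = subtopology B (insert p (e ` Y))"
  have "continuous_map (subtopology X Y) (powertop_real I) f"
    using f' by (auto simp: homeomorphic_maps_def continuous_map_in_subtopology)
  then obtain G where G: "continuous_map S (powertop_real I) G" and Ge: "\<And>y. y \<in> Y \<Longrightarrow> G (e y) = f y"
    unfolding S_def using hewitt_extend_product[OF X Y] p by (metis IntD1)
  have "insert p (e ` Y) \<inter> e ` Y = e ` Y"
    by blast
  then have pS: "p \<in> S closure_of (e ` Y)"
    using p by (simp add: S_def closure_of_subtopology)
  have "G ` e ` Y \<subseteq> f ` Y"
    using Ge by auto
  then have "G p \<in> f ` Y"
    using image_closure_of_subset_closedin[OF G cl] pS by blast
  then obtain y0 where y0: "y0 \<in> Y" "G p = f y0"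
    by blast
  have "G \<in> topspace S \<rightarrow> f ` Y"
    using y0 Ge by (auto simp: S_def)
  then have "continuous_map S (subtopology (powertop_real I) (f ` Y)) G"
    using G by (simp add: continuous_map_in_subtopology)
  then have "continuous_map S B (e \<circ> f' \<circ> G)"
    using f' stone_cech_continuous_map[OF sc]
    by (meson continuous_map_compose continuous_map_from_subtopology homeomorphic_maps_def)
  moreover have "continuous_map S B id"
    by (simp add: S_def continuous_map_from_subtopology)
  moreover have "Hausdorff_space B"
    using sc by (simp add: stone_cech_def)
  moreover have "(e \<circ> f' \<circ> G) (e y) = id (e y)" if "y \<in> Y" for y
    using f' that Ge tY by (simp add: homeomorphic_maps_def)
  ultimately have "(e \<circ> f' \<circ> G) p = id p"
    using forall_in_closure_of_eq[OF pS] by blast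
  then show "p \<in> e ` Y"
    using f' y0 tY by (auto simp: homeomorphic_maps_def)
qed

lemma closure_point_squashed_coordinates:
  assumes sc: "stone_cech X B e" and YX: "Y \<subseteq> topspace X"
    and h: "\<And>k. k \<in> I \<Longrightarrow> continuous_map B euclideanreal (h k)"
      "\<And>k x. k \<in> I \<Longrightarrow> x \<in> topspace X \<Longrightarrow> h k (e x) = squash (k x)"
    and q: "q \<in> powertop_real I closure_of ((\<lambda>x. \<lambda>k\<in>I. k x) ` Y)"
  obtains b where "b \<in> B closure_of (e ` Y)" "\<forall>k\<in>I. h k b = squash (q k)"
proof -
  define \<Phi> where "\<Phi> b = (\<lambda>k\<in>I. h k b)" for b
  define \<Psi> where "\<Psi> z = (\<lambda>k\<in>I. squash (z k))" for z
  have \<Phi>: "continuous_map B (powertop_real I) \<Phi>"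
    using h(1) by (auto simp: \<Phi>_def continuous_map_componentwise)
  have "continuous_map (powertop_real I) euclideanreal (\<lambda>z. squash (z k))" if "k \<in> I" for k
    using continuous_map_compose[OF continuous_map_product_projection[OF that] continuous_map_squash]
    by (simp add: o_def)
  then have \<Psi>: "continuous_map (powertop_real I) (powertop_real I) \<Psi>"
    by (auto simp: \<Psi>_def continuous_map_componentwise)
  have eY: "e ` Y \<subseteq> topspace B"
    using continuous_map_image_subset_topspace[OF stone_cech_continuous_map[OF sc]] YX by blast
  have "\<Psi> q \<in> powertop_real I closure_of (\<Psi> ` (\<lambda>x. \<lambda>k\<in>I. k x) ` Y)"
    using continuous_map_image_closure_subset[OF \<Psi>] q by (rule subsetD[OF _ imageI])
  also have "\<Psi> ` (\<lambda>x. \<lambda>k\<in>I. k x) ` Y = \<Phi> ` e ` Y"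
    unfolding image_image using YX h(2)
    by (intro image_cong) (auto simp: \<Psi>_def \<Phi>_def intro!: restrict_ext)
  also have "powertop_real I closure_of (\<Phi> ` e ` Y) = \<Phi> ` (B closure_of (e ` Y))"
    using \<Phi> eY sc by (intro closure_of_image_compact) (auto simp: stone_cech_def Hausdorff_space_product_topology)
  finally obtain b where b: "b \<in> B closure_of (e ` Y)" and \<Phi>b: "\<Phi> b = \<Psi> q"
    by (metis imageE)
  have "\<forall>k\<in>I. h k b = squash (q k)"
  proof
    fix k assume "k \<in> I"
    then show "h k b = squash (q k)"
      using fun_cong[OF \<Phi>b, of k] by (simp add: \<Phi>_def \<Psi>_def)
  qed
  with b show thesis
    by (rule that)
qed

lemma evaluation_closure_point_over_hewitt:
  assumes sc: "stone_cech X B e" and YX: "Y \<subseteq> topspace X"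
    and q: "q \<in> powertop_real {g. continuous_map X euclideanreal g} closure_of (evaluation_map X ` Y)"
  obtains b where "b \<in> hewitt X B e" "b \<in> B closure_of (e ` Y)"
    "\<And>x. x \<in> topspace X \<Longrightarrow> b = e x \<Longrightarrow> q = evaluation_map X x"
proof -
  define I where "I = {g. continuous_map X euclideanreal g}"
  obtain h where h: "\<And>k. k \<in> I \<Longrightarrow> continuous_map B euclideanreal (h k)"
      "\<And>k x. k \<in> I \<Longrightarrow> x \<in> topspace X \<Longrightarrow> h k (e x) = squash (k x)"
    unfolding I_def mem_Collect_eq by (rule stone_cech_squash_extensions[OF sc]) blast
  have q': "q \<in> powertop_real I closure_of ((\<lambda>x. \<lambda>k\<in>I. k x) ` Y)"
    using q by (simp add: I_def evaluation_map_def[abs_def])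
  obtain b where b: "b \<in> B closure_of (e ` Y)" and hb: "\<forall>k\<in>I. h k b = squash (q k)"
    by (rule closure_point_squashed_coordinates[OF sc YX h q']) blast
  have hewitt_b: "b \<in> hewitt X B e"
  proof (rule in_hewittI)
    show "b \<in> topspace B"
      using closure_of_subset_topspace b by (rule subsetD)
    fix f assume "continuous_map X euclideanreal f"
    then have f: "f \<in> I"
      by (simp add: I_def)
    then have "h f b = squash (q f)"
      using hb by simp
    then show "\<exists>k. continuous_map B euclideanreal k \<and> (\<forall>x\<in>topspace X. k (e x) = squash (f x)) \<and>
        k b \<in> {0<..<1}"
      using h(1)[OF f] h(2)[OF f] squash_range by (intro exI[of _ "h f"] conjI) auto
  qed
  have "q = evaluation_map X x" if x: "x \<in> topspace X" "b = e x" for x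
  proof
    fix k
    have "q \<in> topspace (powertop_real I)"
      using closure_of_subset_topspace q' by (rule subsetD)
    show "q k = evaluation_map X x k"
    proof (cases "k \<in> I")
      case True
      then have "squash (q k) = squash (k x)"
        using hb h(2)[OF True x(1)] x(2) by simp
      then show ?thesis
        using True by (simp add: I_def evaluation_map_def)
    next
      case False
      then show ?thesis
        using \<open>q \<in> topspace (powertop_real I)\<close> by (auto simp: I_def evaluation_map_def PiE_iff extensional_def)
    qed
  qed
  then show thesis
    by (rule that[OF hewitt_b b])
qed

lemma realcompact_space_if_hewitt_Int_closure_of:
  assumes sc: "stone_cech X B e" and X: "completely_regular_space X" "Hausdorff_space X"
    and Y: "closedin X Y"
    and hewitt_Y: "hewitt X B e \<inter> B closure_of (e ` Y) \<subseteq> e ` topspace X"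
  shows "realcompact_space (subtopology X Y)"
proof -
  define P where "P = powertop_real {g. continuous_map X euclideanreal g}"
  have YX: "Y \<subseteq> topspace X"
    using Y closedin_subset by blast
  have "P closure_of (evaluation_map X ` Y) \<subseteq> evaluation_map X ` Y"
  proof
    fix q assume "q \<in> P closure_of (evaluation_map X ` Y)"
    then obtain b where b: "b \<in> hewitt X B e" "b \<in> B closure_of (e ` Y)"
        and q: "\<And>x. x \<in> topspace X \<Longrightarrow> b = e x \<Longrightarrow> q = evaluation_map X x"
      unfolding P_def by (rule evaluation_closure_point_over_hewitt[OF sc YX]) blast
    have "b \<in> e ` topspace X \<inter> B closure_of (e ` Y)"
      using hewitt_Y b by blast
    also have "e ` topspace X \<inter> B closure_of (e ` Y) = e ` Y"
      using embedding_map_closure_of_image[OF _ YX, of B e] sc Y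
      by (simp add: stone_cech_def closure_of_closedin)
    finally obtain x where "x \<in> Y" "b = e x"
      by blast
    then show "q \<in> evaluation_map X ` Y"
      using q YX by blast
  qed
  moreover have "evaluation_map X ` Y \<subseteq> topspace P"
    unfolding P_def evaluation_map_def by (simp add: image_subset_iff)
  ultimately have "closedin P (evaluation_map X ` topspace (subtopology X Y))"
    using YX closure_of_subset_eq by (fastforce simp: Int_absorb1)
  moreover have "embedding_map (subtopology X Y) P (evaluation_map X)"
    using embedding_map_from_subtopology[OF embedding_map_evaluation[OF X] YX] unfolding P_def .
  ultimately show ?thesis
    unfolding realcompact_space_def P_def by blast
qed

lemma lambda_realcompact_subset:
  assumes sc: "stone_cech X B e" and X: "normal_space X"
  shows "lambda_realcompact X B e \<subseteq> topspace B - B closure_of (hewitt X B e - e ` topspace X)"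
proof
  fix p assume "p \<in> lambda_realcompact X B e"
  then obtain C where C: "C \<in> cozero_sets X" and rc: "realcompact_space (subtopology X (X closure_of C))"
      and p: "p \<in> B interior_of (B closure_of (e ` C))"
    unfolding lambda_realcompact_def by blast
  have "C \<subseteq> topspace X"
    using C by (auto simp: cozero_sets_def)
  then have "B closure_of (e ` C) \<subseteq> B closure_of (e ` (X closure_of C))"
    by (intro closure_of_mono image_mono closure_of_subset)
  moreover have "hewitt X B e \<inter> B closure_of (e ` (X closure_of C)) \<subseteq> e ` topspace X"
    using hewitt_Int_closure_of_realcompact[OF sc X closedin_closure_of rc]
    by (rule order_trans[OF _ image_mono[OF closure_of_subset_topspace]])
  ultimately have "B interior_of (B closure_of (e ` C)) \<inter> (hewitt X B e - e ` topspace X) = {}"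
    using interior_of_subset[of B "B closure_of (e ` C)"] by blast
  then have "B interior_of (B closure_of (e ` C)) \<inter> B closure_of (hewitt X B e - e ` topspace X) = {}"
    by (simp add: openin_Int_closure_of_eq_empty)
  moreover have "p \<in> topspace B"
    using interior_of_subset_topspace p by (rule subsetD)
  ultimately show "p \<in> topspace B - B closure_of (hewitt X B e - e ` topspace X)"
    using p by blast
qed

lemma subset_lambda_realcompact:
  assumes sc: "stone_cech X B e" and X: "completely_regular_space X" "Hausdorff_space X"
  shows "topspace B - B closure_of (hewitt X B e - e ` topspace X) \<subseteq> lambda_realcompact X B e"
proof
  define Z where "Z = B closure_of (hewitt X B e - e ` topspace X)"
  fix p assume "p \<in> topspace B - B closure_of (hewitt X B e - e ` topspace X)"
  then obtain C where C: "C \<in> cozero_sets X" and p: "p \<in> B interior_of (B closure_of (e ` C))"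
      and disjoint: "B closure_of (e ` (X closure_of C)) \<inter> Z = {}"
    unfolding Z_def by (rule stone_cech_separating_cozero_set[OF sc closedin_closure_of])
  have "hewitt X B e \<inter> B closure_of (e ` (X closure_of C)) \<subseteq> e ` topspace X"
  proof
    fix b assume b: "b \<in> hewitt X B e \<inter> B closure_of (e ` (X closure_of C))"
    show "b \<in> e ` topspace X"
    proof (rule ccontr)
      assume "b \<notin> e ` topspace X"
      then have "b \<in> Z"
        using b closure_of_subset[of "hewitt X B e - e ` topspace X" B]
        by (auto simp: Z_def hewitt_def)
      then show False
        using b disjoint by blast
    qed
  qed
  then have "realcompact_space (subtopology X (X closure_of C))"
    by (rule realcompact_space_if_hewitt_Int_closure_of[OF sc X closedin_closure_of])
  then have "B interior_of (B closure_of (e ` C)) \<subseteq> lambda_realcompact X B e"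
    unfolding lambda_realcompact_def using C by (intro Union_upper) auto
  then show "p \<in> lambda_realcompact X B e"
    using p by blast
qed

theorem proposition4p31:
  fixes X :: "'a topology" and B :: "'b topology" and e :: "'a \<Rightarrow> 'b"
  assumes "completely_regular_space X" and "Hausdorff_space X"
    and "normal_space X"
    and "stone_cech X B e"
  shows "lambda_realcompact X B e =
           topspace B - B closure_of (hewitt X B e - e ` topspace X)"
  using lambda_realcompact_subset[OF assms(4,3)] subset_lambda_realcompact[OF assms(4,1,2)]
  by (rule equalityI)

end
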